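(* Let $N$ be a positive integer, $L>0$, and $\zeta=(\zeta_0,\dots,\zeta_{N+2})\in\mathbb{R}^{N+3}$ with $\zeta_0>\zeta_1>\dots>\zeta_{N+1}>\zeta_{N+2}=0$. Let $W^\zeta$ and $w^\zeta$ be as defined in the context. Let $\bar y=(\bar y_0,\dots,\bar y_N)\in\mathbb{R}^{N+1}$. If $\bar y_k\geq 0$ for some $k\in\{0,\dots,N\}$, then the minimization problem defining $W^\zeta(\bar y)$ has an optimal solution $(\nu^*,\alpha^* )$ in which $\alpha^*$ has the form \[ \alpha^*=(\underbrace{0,\dots,0}_{m},\alpha^*_m,1-\alpha^*_m,\underbrace{0,\dots,0}_{N-m}) \] for some $m\in\{0,\dots,N\}$, and in addition $\alpha^*_{k+1}=\dots=\alpha^*_{N+1}=0$.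
   Context: Let $e_0,\dots,e_N$ denote the standard unit vectors of $\mathbb{R}^{N+1}$ (zero-based indexing). Define for $i=0,\dots,N+1$: $x_i=-\sum_{j=0}^{i-1}\frac{\zeta_j-\zeta_{i+1}}{\sqrt{\zeta_j-\zeta_{j+1}}}e_j\in\mathbb{R}^{N+1}$; $g_i=L\sqrt{\zeta_i-\zeta_{i+1}}\,e_i$ for $i=0,\dots,N$ and $g_{N+1}=0$; $f_i=\frac L2(\zeta_i+\zeta_{i+1})$ for $i=0,\dots,N$ and $f_{N+1}=0$. For $y\in\mathbb{R}^{N+1}$, $\nu\in\mathbb{R}^{N+1}$, $\alpha=(\alpha_0,\dots,\alpha_{N+1})\in\mathbb{R}^{N+2}$ let $w^\zeta(y,\nu,\alpha)=\frac L2\|y+\nu-\sum_{i=0}^{N+1}\alpha_i(x_i-\frac1Lg_i)\|^2+\sum_{i=0}^{N+1}\alpha_i(f_i-\frac1{2L}\|g_i\|^2)$, and $W^\zeta(y)=\min\{w^\zeta(y,\nu,\alpha):\nu\in\mathbb{R}^{N+1}_+,\ \alpha\in\Delta_{N+2}\}$, where $\mathbb{R}^{N+1}_+$ is the nonnegative orthant and $\Delta_{N+2}=\{\alpha\in\mathbb{R}^{N+2}:\alpha_i\geq0,\ \sum_i\alpha_i=1\}$. An optimal solution of $W^\zeta(y)$ is a minimizing pair $(\nu,\alpha)$. *)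

theory Defs
  imports Complex_Main
begin

text \<open>Vectors in R^(N+1) are represented as functions nat => real, only the
  indices 0..N being relevant; vectors in R^(N+2) (alpha) use indices 0..N+1.\<close>

definition xpt :: "(nat \<Rightarrow> real) \<Rightarrow> nat \<Rightarrow> nat \<Rightarrow> real" where
  "xpt \<zeta> i j = (if j < i then - ((\<zeta> j - \<zeta> (i+1)) / sqrt (\<zeta> j - \<zeta> (j+1))) else 0)"

definition gpt :: "nat \<Rightarrow> real \<Rightarrow> (nat \<Rightarrow> real) \<Rightarrow> nat \<Rightarrow> nat \<Rightarrow> real" where
  "gpt N L \<zeta> i j = (if i \<le> N \<and> j = i then L * sqrt (\<zeta> i - \<zeta> (i+1)) else 0)"

definition fval :: "nat \<Rightarrow> real \<Rightarrow> (nat \<Rightarrow> real) \<Rightarrow> nat \<Rightarrow> real" where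
  "fval N L \<zeta> i = (if i \<le> N then L / 2 * (\<zeta> i + \<zeta> (i+1)) else 0)"

definition wfun :: "nat \<Rightarrow> real \<Rightarrow> (nat \<Rightarrow> real) \<Rightarrow> (nat \<Rightarrow> real) \<Rightarrow> (nat \<Rightarrow> real)
    \<Rightarrow> (nat \<Rightarrow> real) \<Rightarrow> real" where
  "wfun N L \<zeta> y \<nu> \<alpha> =
     L / 2 * (\<Sum>j\<le>N. (y j + \<nu> j - (\<Sum>i\<le>N+1. \<alpha> i * (xpt \<zeta> i j - gpt N L \<zeta> i j / L)))^2)
     + (\<Sum>i\<le>N+1. \<alpha> i * (fval N L \<zeta> i - 1 / (2 * L) * (\<Sum>j\<le>N. (gpt N L \<zeta> i j)^2)))"

definition feasible :: "nat \<Rightarrow> (nat \<Rightarrow> real) \<Rightarrow> (nat \<Rightarrow> real) \<Rightarrow> bool" where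
  "feasible N \<nu> \<alpha> \<longleftrightarrow> (\<forall>j\<le>N. \<nu> j \<ge> 0) \<and> (\<forall>i\<le>N+1. \<alpha> i \<ge> 0) \<and> (\<Sum>i\<le>N+1. \<alpha> i) = 1"

definition optimal_W :: "nat \<Rightarrow> real \<Rightarrow> (nat \<Rightarrow> real) \<Rightarrow> (nat \<Rightarrow> real) \<Rightarrow> (nat \<Rightarrow> real)
    \<Rightarrow> (nat \<Rightarrow> real) \<Rightarrow> bool" where
  "optimal_W N L \<zeta> y \<nu> \<alpha> \<longleftrightarrow> feasible N \<nu> \<alpha> \<and>
     (\<forall>\<nu>' \<alpha>'. feasible N \<nu>' \<alpha>' \<longrightarrow> wfun N L \<zeta> y \<nu> \<alpha> \<le> wfun N L \<zeta> y \<nu>' \<alpha>')"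

end

theory Submission
  imports Defs
begin

text \<open>Writing \<open>s j = sqrt (\<zeta> j - \<zeta> (j + 1))\<close> and \<open>\<mu> = (\<Sum>i. \<alpha> i * \<zeta> (i + 1))\<close>, the objective is
  \<open>L/2 * (\<Sum>j. (y j + \<nu> j + (\<Sum>i. \<alpha> i * max (\<zeta> j - \<zeta> (i + 1)) 0) / s j)\<^sup>2) + L * \<mu>\<close>.
  Convexity of the hinge bounds the inner sum below by \<open>max (\<zeta> j - \<mu>) 0\<close>, so the objective
  is at least a function \<open>G \<mu>\<close> of one real variable. This bound is attained by weights on two
  consecutive indices \<open>m, m + 1\<close> with \<open>\<zeta> (m + 2) \<le> \<mu> \<le> \<zeta> (m + 1)\<close>, where all hinges are
  affine in the weights, together with the \<open>\<nu>\<close> that clips the residuals at \<open>0\<close>. Finally, since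
  \<open>y k \<ge> 0\<close>, lowering \<open>\<mu>\<close> below \<open>\<zeta> (k + 1)\<close> never decreases \<open>G\<close>, so \<open>G\<close> has a minimiser in
  \<open>[\<zeta> (k + 1), \<zeta> 1]\<close>, which forces \<open>m \<le> k\<close> and \<open>\<alpha> (k + 1) = 0\<close>.\<close>

lemma hinge_convex_combination:
  fixes \<alpha> c :: "'a \<Rightarrow> real"
  assumes "finite A" and "\<And>i. i \<in> A \<Longrightarrow> 0 \<le> \<alpha> i" and "sum \<alpha> A = 1"
  shows "max (z - (\<Sum>i\<in>A. \<alpha> i * c i)) 0 \<le> (\<Sum>i\<in>A. \<alpha> i * max (z - c i) 0)"
proof -
  have "z - (\<Sum>i\<in>A. \<alpha> i * c i) = (\<Sum>i\<in>A. \<alpha> i * (z - c i))"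
    using assms(3) by (simp add: right_diff_distrib sum_subtractf sum_distrib_right[symmetric])
  also have "\<dots> \<le> (\<Sum>i\<in>A. \<alpha> i * max (z - c i) 0)"
    using assms(2) by (intro sum_mono mult_left_mono) auto
  finally show ?thesis
    using assms(2) by (simp add: sum_nonneg)
qed

lemma hinge_interpolation:
  fixes a b t z :: real
  assumes "0 \<le> t" "t \<le> 1" "b \<le> a" "z \<le> b \<or> a \<le> z"
  shows "t * max (z - a) 0 + (1 - t) * max (z - b) 0 = max (z - (t * a + (1 - t) * b)) 0"
proof -
  have "0 \<le> t * (a - b)" "0 \<le> (1 - t) * (a - b)"
    using assms(1-3) by simp_all
  then have "b \<le> t * a + (1 - t) * b" "t * a + (1 - t) * b \<le> a"
    by (simp_all add: algebra_simps)
  with assms(3,4) consider "z \<le> a" "z \<le> b" "z \<le> t * a + (1 - t) * b" | "b \<le> z" "a \<le> z" "t * a + (1 - t) * b \<le> z"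
    by linarith
  then show ?thesis
    by cases (simp_all add: algebra_simps)
qed

lemma square_shift_gain:
  fixes y s \<delta> :: real
  assumes "0 \<le> y" "0 < s" "0 \<le> \<delta>"
  shows "(y + s)\<^sup>2 + 2 * \<delta> \<le> (y + s + \<delta> / s)\<^sup>2"
proof -
  have "(y + s + \<delta> / s)\<^sup>2 = (y + s)\<^sup>2 + 2 * \<delta> + (2 * y * (\<delta> / s) + (\<delta> / s)\<^sup>2)"
    using assms(2) by (simp add: power2_eq_square field_simps)
  moreover have "0 \<le> 2 * y * (\<delta> / s)"
    using assms by simp
  ultimately show ?thesis by simp
qed

lemma exists_crossing:
  fixes f :: "nat \<Rightarrow> real"
  assumes "\<mu> \<le> f 1" "f (k + 1) < \<mu>"
  shows "\<exists>m<k. \<mu> \<le> f (m + 1) \<and> f (m + 2) < \<mu>"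
  using assms
proof (induction k)
  case 0
  then show ?case by simp
next
  case (Suc k)
  show ?case
  proof (cases "f (k + 1) < \<mu>")
    case True
    then show ?thesis using Suc by (meson less_SucI)
  next
    case False
    then show ?thesis using Suc.prems by (intro exI[of _ k]) auto
  qed
qed

definition two_point :: "nat \<Rightarrow> real \<Rightarrow> nat \<Rightarrow> real" where
  "two_point m t i = (if i = m then t else if i = m + 1 then 1 - t else 0)"

lemma sum_two_point:
  fixes c :: "nat \<Rightarrow> real"
  assumes "m \<le> N"
  shows "(\<Sum>i\<le>N+1. two_point m t i * c i) = t * c m + (1 - t) * c (m + 1)"
proof -
  have pointwise: "(\<lambda>i. two_point m t i * c i) =
     (\<lambda>i. (if i = m then t * c m else 0) + (if i = m + 1 then (1 - t) * c (m + 1) else 0))"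
    by (rule ext) (simp add: two_point_def)
  show ?thesis
    unfolding pointwise sum.distrib using assms by simp
qed

definition root_gap :: "(nat \<Rightarrow> real) \<Rightarrow> nat \<Rightarrow> real" where
  "root_gap \<zeta> j = sqrt (\<zeta> j - \<zeta> (j + 1))"

definition hinge_load :: "nat \<Rightarrow> (nat \<Rightarrow> real) \<Rightarrow> (nat \<Rightarrow> real) \<Rightarrow> nat \<Rightarrow> real" where
  "hinge_load N \<zeta> \<alpha> j = (\<Sum>i\<le>N+1. \<alpha> i * max (\<zeta> j - \<zeta> (i + 1)) 0)"

definition mean_level :: "nat \<Rightarrow> (nat \<Rightarrow> real) \<Rightarrow> (nat \<Rightarrow> real) \<Rightarrow> real" where
  "mean_level N \<zeta> \<alpha> = (\<Sum>i\<le>N+1. \<alpha> i * \<zeta> (i + 1))"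

definition clipped_residual :: "(nat \<Rightarrow> real) \<Rightarrow> (nat \<Rightarrow> real) \<Rightarrow> real \<Rightarrow> nat \<Rightarrow> real" where
  "clipped_residual \<zeta> y \<mu> j = max (y j + max (\<zeta> j - \<mu>) 0 / root_gap \<zeta> j) 0"

definition reduced_obj :: "nat \<Rightarrow> real \<Rightarrow> (nat \<Rightarrow> real) \<Rightarrow> (nat \<Rightarrow> real) \<Rightarrow> real \<Rightarrow> real" where
  "reduced_obj N L \<zeta> y \<mu> = L * \<mu> + L / 2 * (\<Sum>j\<le>N. (clipped_residual \<zeta> y \<mu> j)\<^sup>2)"

locale decreasing_levels =
  fixes N :: nat and L :: real and \<zeta> :: "nat \<Rightarrow> real"
  assumes L_pos: "L > 0"
    and levels_decrease: "\<And>i. i \<le> N + 1 \<Longrightarrow> \<zeta> i > \<zeta> (i + 1)"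
    and last_level: "\<zeta> (N + 2) = 0"
begin

lemma levels_antimono:
  assumes "a \<le> b" "b \<le> N + 2"
  shows "\<zeta> b \<le> \<zeta> a"
  using assms
proof (induction b rule: dec_induct)
  case (step n)
  then show ?case using levels_decrease[of n] by simp
qed simp

lemma root_gap_pos: "j \<le> N + 1 \<Longrightarrow> root_gap \<zeta> j > 0"
  using levels_decrease unfolding root_gap_def by simp

lemma root_gap_squared: "j \<le> N + 1 \<Longrightarrow> (root_gap \<zeta> j)\<^sup>2 = \<zeta> j - \<zeta> (j + 1)"
  using levels_decrease[of j] unfolding root_gap_def by simp

lemma xpt_minus_gpt:
  assumes "j \<le> N" "i \<le> N + 1"
  shows "xpt \<zeta> i j - gpt N L \<zeta> i j / L = - (max (\<zeta> j - \<zeta> (i + 1)) 0 / root_gap \<zeta> j)"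
proof -
  consider "j < i" | "j = i" | "i < j" by linarith
  then show ?thesis
  proof cases
    case 1
    then have "\<zeta> (i + 1) \<le> \<zeta> j" using levels_antimono[of j "i + 1"] assms by simp
    then show ?thesis using 1 unfolding xpt_def gpt_def root_gap_def by simp
  next
    case 2
    then have "max (\<zeta> j - \<zeta> (i + 1)) 0 = (root_gap \<zeta> i)\<^sup>2"
      using root_gap_squared[of i] levels_decrease[of i] assms by simp
    then show ?thesis
      using 2 assms root_gap_pos[of i] L_pos unfolding xpt_def gpt_def
      by (simp add: root_gap_def power2_eq_square real_div_sqrt)
  next
    case 3
    then have "\<zeta> j \<le> \<zeta> (i + 1)" using levels_antimono[of "i + 1" j] assms by simp
    then show ?thesis using 3 unfolding xpt_def gpt_def by simp
  qed
qed

lemma fval_minus_gpt: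
  assumes "i \<le> N + 1"
  shows "fval N L \<zeta> i - 1 / (2 * L) * (\<Sum>j\<le>N. (gpt N L \<zeta> i j)\<^sup>2) = L * \<zeta> (i + 1)"
proof (cases "i \<le> N")
  case True
  have "(\<Sum>j\<le>N. (gpt N L \<zeta> i j)\<^sup>2) = (\<Sum>j\<le>N. if j = i then L\<^sup>2 * (root_gap \<zeta> i)\<^sup>2 else 0)"
    by (rule sum.cong) (auto simp: gpt_def root_gap_def power_mult_distrib True)
  also have "\<dots> = L\<^sup>2 * (\<zeta> i - \<zeta> (i + 1))"
    using True root_gap_squared[of i] by simp
  finally show ?thesis
    using True L_pos unfolding fval_def by (simp add: field_simps power2_eq_square)
next
  case False
  then have "i = N + 1" using assms by simp
  then show ?thesis using last_level unfolding fval_def gpt_def by simp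
qed

lemma wfun_eq:
  "wfun N L \<zeta> y \<nu> \<alpha> =
     L / 2 * (\<Sum>j\<le>N. (y j + \<nu> j + hinge_load N \<zeta> \<alpha> j / root_gap \<zeta> j)\<^sup>2) + L * mean_level N \<zeta> \<alpha>"
proof -
  have "(\<Sum>i\<le>N+1. \<alpha> i * (xpt \<zeta> i j - gpt N L \<zeta> i j / L)) = - (hinge_load N \<zeta> \<alpha> j / root_gap \<zeta> j)"
    if "j \<le> N" for j
  proof -
    have "(\<Sum>i\<le>N+1. \<alpha> i * (xpt \<zeta> i j - gpt N L \<zeta> i j / L))
        = (\<Sum>i\<le>N+1. - (\<alpha> i * max (\<zeta> j - \<zeta> (i + 1)) 0 / root_gap \<zeta> j))"
      using that by (intro sum.cong) (simp_all add: xpt_minus_gpt)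
    also have "\<dots> = - (hinge_load N \<zeta> \<alpha> j / root_gap \<zeta> j)"
      unfolding hinge_load_def sum_negf sum_divide_distrib ..
    finally show ?thesis .
  qed
  moreover have "(\<Sum>i\<le>N+1. \<alpha> i * (fval N L \<zeta> i - 1 / (2 * L) * (\<Sum>j\<le>N. (gpt N L \<zeta> i j)\<^sup>2)))
      = L * mean_level N \<zeta> \<alpha>"
    unfolding mean_level_def sum_distrib_left[of L]
  proof (intro sum.cong refl)
    fix i assume "i \<in> {..N+1}"
    then show "\<alpha> i * (fval N L \<zeta> i - 1 / (2 * L) * (\<Sum>j\<le>N. (gpt N L \<zeta> i j)\<^sup>2)) = L * (\<alpha> i * \<zeta> (i + 1))"
      by (simp only: atMost_iff fval_minus_gpt mult.left_commute)
  qed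
  ultimately show ?thesis
    unfolding wfun_def by simp
qed

lemma mean_level_bounds:
  assumes "feasible N \<nu> \<alpha>"
  shows "0 \<le> mean_level N \<zeta> \<alpha>" "mean_level N \<zeta> \<alpha> \<le> \<zeta> 1"
proof -
  have \<alpha>_nonneg: "\<And>i. i \<le> N + 1 \<Longrightarrow> 0 \<le> \<alpha> i" and \<alpha>_sum: "(\<Sum>i\<le>N+1. \<alpha> i) = 1"
    using assms unfolding feasible_def by auto
  have level_bounds: "0 \<le> \<zeta> (i + 1)" "\<zeta> (i + 1) \<le> \<zeta> 1" if "i \<le> N + 1" for i
    using that levels_antimono[of "i + 1" "N + 2"] levels_antimono[of 1 "i + 1"] last_level by simp_all
  have "0 \<le> mean_level N \<zeta> \<alpha>"
    unfolding mean_level_def using \<alpha>_nonneg level_bounds(1) by (intro sum_nonneg) simp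
  moreover have "mean_level N \<zeta> \<alpha> \<le> (\<Sum>i\<le>N+1. \<alpha> i * \<zeta> 1)"
    unfolding mean_level_def using \<alpha>_nonneg level_bounds(2) by (intro sum_mono mult_left_mono) simp_all
  ultimately show "0 \<le> mean_level N \<zeta> \<alpha>" "mean_level N \<zeta> \<alpha> \<le> \<zeta> 1"
    using \<alpha>_sum by (simp_all add: sum_distrib_right[symmetric])
qed

lemma reduced_obj_le_wfun:
  assumes "feasible N \<nu> \<alpha>"
  shows "reduced_obj N L \<zeta> y (mean_level N \<zeta> \<alpha>) \<le> wfun N L \<zeta> y \<nu> \<alpha>"
proof -
  have \<alpha>_nonneg: "\<And>i. i \<in> {..N+1} \<Longrightarrow> 0 \<le> \<alpha> i" and \<alpha>_sum: "sum \<alpha> {..N+1} = 1"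
    and \<nu>_nonneg: "\<And>j. j \<le> N \<Longrightarrow> 0 \<le> \<nu> j"
    using assms unfolding feasible_def by auto
  have "(clipped_residual \<zeta> y (mean_level N \<zeta> \<alpha>) j)\<^sup>2 \<le> (y j + \<nu> j + hinge_load N \<zeta> \<alpha> j / root_gap \<zeta> j)\<^sup>2"
    if "j \<le> N" for j
  proof -
    have "max (\<zeta> j - mean_level N \<zeta> \<alpha>) 0 \<le> hinge_load N \<zeta> \<alpha> j"
      unfolding mean_level_def hinge_load_def
      using hinge_convex_combination[OF _ \<alpha>_nonneg \<alpha>_sum] by simp
    then have "max (\<zeta> j - mean_level N \<zeta> \<alpha>) 0 / root_gap \<zeta> j \<le> hinge_load N \<zeta> \<alpha> j / root_gap \<zeta> j"
      using root_gap_pos[of j] that by (simp add: divide_right_mono)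
    then have "y j + max (\<zeta> j - mean_level N \<zeta> \<alpha>) 0 / root_gap \<zeta> j \<le> y j + \<nu> j + hinge_load N \<zeta> \<alpha> j / root_gap \<zeta> j"
      using \<nu>_nonneg[OF that] by linarith
    then show ?thesis
      unfolding clipped_residual_def by (auto simp: max_def intro: power_mono)
  qed
  then have "(\<Sum>j\<le>N. (clipped_residual \<zeta> y (mean_level N \<zeta> \<alpha>) j)\<^sup>2)
      \<le> (\<Sum>j\<le>N. (y j + \<nu> j + hinge_load N \<zeta> \<alpha> j / root_gap \<zeta> j)\<^sup>2)"
    by (intro sum_mono) simp
  then show ?thesis
    unfolding wfun_eq reduced_obj_def using L_pos by simp
qed

lemma clipped_residual_antimono:
  assumes "j \<le> N" "\<mu> \<le> \<mu>'"
  shows "clipped_residual \<zeta> y \<mu>' j \<le> clipped_residual \<zeta> y \<mu> j"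
proof -
  have "max (\<zeta> j - \<mu>') 0 / root_gap \<zeta> j \<le> max (\<zeta> j - \<mu>) 0 / root_gap \<zeta> j"
    using assms root_gap_pos[of j] by (simp add: divide_right_mono)
  then show ?thesis
    unfolding clipped_residual_def by simp
qed

lemma clipped_residual_at_next_level:
  assumes "k \<le> N" "0 \<le> y k" "\<mu> \<le> \<zeta> (k + 1)"
  shows "clipped_residual \<zeta> y \<mu> k = y k + root_gap \<zeta> k + (\<zeta> (k + 1) - \<mu>) / root_gap \<zeta> k"
proof -
  have "(\<zeta> k - \<zeta> (k + 1)) / root_gap \<zeta> k = root_gap \<zeta> k"
    using root_gap_pos[of k] root_gap_squared[of k] assms(1) by (simp add: field_simps power2_eq_square)
  moreover have "(\<zeta> k - \<mu>) / root_gap \<zeta> k = (\<zeta> k - \<zeta> (k + 1)) / root_gap \<zeta> k + (\<zeta> (k + 1) - \<mu>) / root_gap \<zeta> k"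
    by (simp add: add_divide_distrib[symmetric])
  moreover have "\<mu> \<le> \<zeta> k" "0 \<le> (\<zeta> k - \<mu>) / root_gap \<zeta> k"
    using assms levels_decrease[of k] root_gap_pos[of k] by simp_all
  ultimately show ?thesis
    unfolding clipped_residual_def using assms(2) by simp
qed

text \<open>Lowering the level below \<open>\<zeta> (k + 1)\<close> by \<open>\<delta>\<close> saves \<open>L \<delta>\<close> in the linear term, but
  since \<open>y k \<ge> 0\<close> the \<open>k\<close>-th residual alone grows in square by at least \<open>2 \<delta>\<close>.\<close>
lemma reduced_obj_below_next_level:
  assumes "k \<le> N" "0 \<le> y k" "\<mu> \<le> \<zeta> (k + 1)"
  shows "reduced_obj N L \<zeta> y (\<zeta> (k + 1)) \<le> reduced_obj N L \<zeta> y \<mu>"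
proof -
  define \<delta> where "\<delta> = \<zeta> (k + 1) - \<mu>"
  define r where "r \<mu>' j = (clipped_residual \<zeta> y \<mu>' j)\<^sup>2" for \<mu>' j
  have "r (\<zeta> (k + 1)) j + (if j = k then 2 * \<delta> else 0) \<le> r \<mu> j" if "j \<le> N" for j
  proof (cases "j = k")
    case True
    have "\<delta> \<ge> 0" "root_gap \<zeta> k > 0"
      using assms root_gap_pos[of k] unfolding \<delta>_def by simp_all
    then show ?thesis
      using True square_shift_gain[of "y k" "root_gap \<zeta> k" \<delta>] assms
        clipped_residual_at_next_level[of k y] clipped_residual_at_next_level[of k y \<mu>]
      unfolding r_def \<delta>_def by simp
  next
    case False
    have "0 \<le> clipped_residual \<zeta> y (\<zeta> (k + 1)) j"
      unfolding clipped_residual_def by simp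
    then show ?thesis
      using False clipped_residual_antimono[OF that assms(3), of y] unfolding r_def
      by (simp add: power_mono)
  qed
  then have "(\<Sum>j\<le>N. r (\<zeta> (k + 1)) j) + 2 * \<delta> \<le> (\<Sum>j\<le>N. r \<mu> j)"
    using sum_mono[of "{..N}" "\<lambda>j. r (\<zeta> (k + 1)) j + (if j = k then 2 * \<delta> else 0)"] assms(1)
    by (simp add: sum.distrib)
  then have "L / 2 * ((\<Sum>j\<le>N. r (\<zeta> (k + 1)) j) + 2 * \<delta>) \<le> L / 2 * (\<Sum>j\<le>N. r \<mu> j)"
    using L_pos by (intro mult_left_mono) simp_all
  then show ?thesis
    unfolding reduced_obj_def r_def[symmetric] \<delta>_def by (simp add: algebra_simps)
qed

lemma reduced_obj_minimum_above_next_level: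
  assumes "k \<le> N" "0 \<le> y k"
  obtains \<mu> where "\<zeta> (k + 1) \<le> \<mu>" "\<mu> \<le> \<zeta> 1"
    "\<And>\<nu> \<alpha>. feasible N \<nu> \<alpha> \<Longrightarrow> reduced_obj N L \<zeta> y \<mu> \<le> wfun N L \<zeta> y \<nu> \<alpha>"
proof -
  have nonempty: "\<zeta> (k + 1) \<le> \<zeta> 1"
    using levels_antimono[of 1 "k + 1"] assms(1) by simp
  have "continuous_on {\<zeta> (k + 1)..\<zeta> 1} (reduced_obj N L \<zeta> y)"
    unfolding reduced_obj_def clipped_residual_def
    using root_gap_pos by (intro continuous_intros) (auto simp: less_imp_neq[symmetric])
  then obtain \<mu> where \<mu>: "\<mu> \<in> {\<zeta> (k + 1)..\<zeta> 1}"
    and \<mu>_min: "\<And>\<mu>'. \<mu>' \<in> {\<zeta> (k + 1)..\<zeta> 1} \<Longrightarrow> reduced_obj N L \<zeta> y \<mu> \<le> reduced_obj N L \<zeta> y \<mu>'"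
    using continuous_attains_inf[OF compact_Icc] nonempty by (metis atLeastAtMost_iff empty_iff order_refl)
  have "reduced_obj N L \<zeta> y \<mu> \<le> wfun N L \<zeta> y \<nu> \<alpha>" if "feasible N \<nu> \<alpha>" for \<nu> \<alpha>
  proof -
    have "reduced_obj N L \<zeta> y \<mu> \<le> reduced_obj N L \<zeta> y (mean_level N \<zeta> \<alpha>)"
    proof (cases "\<zeta> (k + 1) \<le> mean_level N \<zeta> \<alpha>")
      case True
      then show ?thesis using \<mu>_min mean_level_bounds[OF that] by simp
    next
      case False
      then show ?thesis
        using \<mu>_min[of "\<zeta> (k + 1)"] nonempty reduced_obj_below_next_level[of k y "mean_level N \<zeta> \<alpha>"] assms
        by simp
    qed
    then show ?thesis
      using reduced_obj_le_wfun[OF that] by (rule order.trans)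
  qed
  with \<mu> show ?thesis
    by (intro that) auto
qed

lemma level_bracket:
  assumes "k \<le> N" "\<zeta> (k + 1) \<le> \<mu>" "\<mu> \<le> \<zeta> 1"
  obtains m where "m \<le> k" "\<zeta> (m + 2) \<le> \<mu>" "\<mu> \<le> \<zeta> (m + 1)" "m = k \<Longrightarrow> \<mu> = \<zeta> (k + 1)"
proof (cases "\<mu> = \<zeta> (k + 1)")
  case True
  then show ?thesis
    using that[of k] levels_antimono[of "k + 1" "k + 2"] assms(1) by simp
next
  case False
  then obtain m where "m < k" "\<mu> \<le> \<zeta> (m + 1)" "\<zeta> (m + 2) < \<mu>"
    using exists_crossing[of \<mu> \<zeta> k] assms(2,3) by auto
  then show ?thesis
    using that[of m] by simp
qed

lemma mean_level_two_point:
  "m \<le> N \<Longrightarrow> mean_level N \<zeta> (two_point m t) = t * \<zeta> (m + 1) + (1 - t) * \<zeta> (m + 2)"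
  unfolding mean_level_def using sum_two_point[of m N t "\<lambda>i. \<zeta> (i + 1)"] by simp

lemma hinge_load_two_point:
  assumes "m \<le> N" "0 \<le> t" "t \<le> 1" "j \<le> N"
  shows "hinge_load N \<zeta> (two_point m t) j = max (\<zeta> j - (t * \<zeta> (m + 1) + (1 - t) * \<zeta> (m + 2))) 0"
proof -
  have "\<zeta> j \<le> \<zeta> (m + 2) \<or> \<zeta> (m + 1) \<le> \<zeta> j"
    using levels_antimono[of "m + 2" j] levels_antimono[of j "m + 1"] assms(1,4)
    by (cases "m + 2 \<le> j") simp_all
  moreover have "\<zeta> (m + 2) \<le> \<zeta> (m + 1)"
    using levels_decrease[of "m + 1"] assms(1) by simp
  ultimately show ?thesis
    unfolding hinge_load_def using assms(1-3) sum_two_point[of m N t "\<lambda>i. max (\<zeta> j - \<zeta> (i + 1)) 0"]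
    by (simp add: hinge_interpolation)
qed

lemma two_point_attains_reduced_obj:
  assumes "m \<le> N" "\<zeta> (m + 2) \<le> \<mu>" "\<mu> \<le> \<zeta> (m + 1)"
  obtains t \<nu> where "0 \<le> t" "t \<le> 1" "\<mu> = \<zeta> (m + 1) \<Longrightarrow> t = 1"
    "feasible N \<nu> (two_point m t)" "wfun N L \<zeta> y \<nu> (two_point m t) = reduced_obj N L \<zeta> y \<mu>"
proof -
  have levels_m_strict: "\<zeta> (m + 2) < \<zeta> (m + 1)"
    using levels_decrease[of "m + 1"] assms(1) by simp
  define t where "t = (\<mu> - \<zeta> (m + 2)) / (\<zeta> (m + 1) - \<zeta> (m + 2))"
  have t: "0 \<le> t" "t \<le> 1" "\<mu> = \<zeta> (m + 1) \<Longrightarrow> t = 1"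
    unfolding t_def using assms(2,3) levels_m_strict by auto
  have "t * (\<zeta> (m + 1) - \<zeta> (m + 2)) = \<mu> - \<zeta> (m + 2)"
    unfolding t_def using levels_m_strict by simp
  then have \<mu>_eq: "t * \<zeta> (m + 1) + (1 - t) * \<zeta> (m + 2) = \<mu>"
    by (simp add: algebra_simps)
  define \<nu> where "\<nu> j = max (- (y j + max (\<zeta> j - \<mu>) 0 / root_gap \<zeta> j)) 0" for j
  have "feasible N \<nu> (two_point m t)"
    unfolding feasible_def using sum_two_point[of m N t "\<lambda>_. 1"] assms(1) t(1,2)
    by (simp add: \<nu>_def two_point_def)
  moreover have "(\<Sum>j\<le>N. (y j + \<nu> j + hinge_load N \<zeta> (two_point m t) j / root_gap \<zeta> j)\<^sup>2)
      = (\<Sum>j\<le>N. (clipped_residual \<zeta> y \<mu> j)\<^sup>2)"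
  proof (rule sum.cong)
    fix j assume "j \<in> {..N}"
    then show "(y j + \<nu> j + hinge_load N \<zeta> (two_point m t) j / root_gap \<zeta> j)\<^sup>2 = (clipped_residual \<zeta> y \<mu> j)\<^sup>2"
      using hinge_load_two_point[OF assms(1) t(1,2), of j] \<mu>_eq
      by (simp add: clipped_residual_def \<nu>_def max_def)
  qed simp
  then have "wfun N L \<zeta> y \<nu> (two_point m t) = reduced_obj N L \<zeta> y \<mu>"
    unfolding wfun_eq reduced_obj_def mean_level_two_point[OF assms(1)] \<mu>_eq by simp
  ultimately show ?thesis
    using t that by blast
qed

end

theorem theorem2:
  fixes N k :: nat and L :: real and \<zeta> y :: "nat \<Rightarrow> real"
  assumes "N \<ge> 1" and "L > 0"
    and "\<And>i. i \<le> N + 1 \<Longrightarrow> \<zeta> i > \<zeta> (i + 1)"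
    and "\<zeta> (N + 2) = 0"
    and "k \<le> N" and "y k \<ge> 0"
  shows "\<exists>\<nu> \<alpha> m. optimal_W N L \<zeta> y \<nu> \<alpha> \<and> m \<le> N
           \<and> (\<forall>i\<le>N+1. i \<noteq> m \<and> i \<noteq> m + 1 \<longrightarrow> \<alpha> i = 0)
           \<and> \<alpha> (m + 1) = 1 - \<alpha> m
           \<and> (\<forall>i. k + 1 \<le> i \<and> i \<le> N + 1 \<longrightarrow> \<alpha> i = 0)"
proof -
  interpret decreasing_levels N L \<zeta>
    using assms(2-4) by unfold_locales
  obtain \<mu> where \<mu>: "\<zeta> (k + 1) \<le> \<mu>" "\<mu> \<le> \<zeta> 1"
    and \<mu>_lower: "\<And>\<nu> \<alpha>. feasible N \<nu> \<alpha> \<Longrightarrow> reduced_obj N L \<zeta> y \<mu> \<le> wfun N L \<zeta> y \<nu> \<alpha>"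
    using reduced_obj_minimum_above_next_level[of k y] assms(5,6) by blast
  obtain m where m: "m \<le> k" "\<zeta> (m + 2) \<le> \<mu>" "\<mu> \<le> \<zeta> (m + 1)" "m = k \<Longrightarrow> \<mu> = \<zeta> (k + 1)"
    using level_bracket[OF assms(5) \<mu>] by blast
  then have "m \<le> N"
    using assms(5) by simp
  then obtain t \<nu> where t: "0 \<le> t" "t \<le> 1" "\<mu> = \<zeta> (m + 1) \<Longrightarrow> t = 1"
    and is_feasible: "feasible N \<nu> (two_point m t)"
    and attains: "wfun N L \<zeta> y \<nu> (two_point m t) = reduced_obj N L \<zeta> y \<mu>"
    using two_point_attains_reduced_obj[of m \<mu> y] m(2,3) by blast
  have "optimal_W N L \<zeta> y \<nu> (two_point m t)"
    unfolding optimal_W_def using is_feasible attains \<mu>_lower by simp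
  moreover have "two_point m t i = 0" if "k + 1 \<le> i" for i
    using that m(1,4) t(3) by (cases "m = k") (auto simp: two_point_def)
  ultimately show ?thesis
    using \<open>m \<le> N\<close> by (intro exI[of _ \<nu>] exI[of _ "two_point m t"] exI[of _ m]) (simp add: two_point_def)
qed

end
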